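(* Let $\varphi_1,\varphi_2\colon\mathbb{R}^n\to\overline{\mathbb{R}}$ be proper nearly convex functions. If $\mathrm{ri}(\mathrm{dom}\,\varphi_1)\cap\mathrm{ri}(\mathrm{dom}\,\varphi_2)\neq \emptyset$, then $$\partial(\varphi_1+\varphi_2)(\bar x)=\partial\varphi_1 (\bar x)+\partial\varphi_2 (\bar x)$$ for all $\bar x\in \mathrm{dom}\,\varphi_1\cap\mathrm{dom}\,\varphi_2$.
   Context: $\overline{\mathbb{R}}=[-\infty,\infty]$; proper means nonempty domain $\mathrm{dom}\,\varphi=\{x\mid\varphi(x)<\infty\}$ and never $-\infty$. A set $D$ is nearly convex if there is a convex $E$ with $E\subset D\subset\overline{E}$; a function is nearly convex if its epigraph is nearly convex. $\mathrm{ri}\,D=\{a\in D\mid\exists\delta>0,\ B(a;\delta)\cap\mathrm{aff}\,D\subset D\}$. For $\bar x\in\mathrm{dom}\,\psi$, $\partial\psi(\bar x)=\{\xi\in\mathbb{R}^n\mid\langle\xi,x-\bar x\rangle\le\psi(x)-\psi(\bar x)\ \forall x\in\mathbb{R}^n\}$. Sums of sets are Minkowski sums. *)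

theory Defs
  imports "HOL-Analysis.Analysis" "HOL-Library.Extended_Real"
begin

definition edom :: "('a \<Rightarrow> ereal) \<Rightarrow> 'a set" where
  "edom f = {x. f x < \<infinity>}"

definition proper_fun :: "('a \<Rightarrow> ereal) \<Rightarrow> bool" where
  "proper_fun f \<longleftrightarrow> edom f \<noteq> {} \<and> (\<forall>x. f x \<noteq> -\<infinity>)"

definition epigraph :: "('a \<Rightarrow> ereal) \<Rightarrow> ('a \<times> real) set" where
  "epigraph f = {(x, t). f x \<le> ereal t}"

definition nearly_convex_set :: "'a::real_normed_vector set \<Rightarrow> bool" where
  "nearly_convex_set D \<longleftrightarrow> (\<exists>E. convex E \<and> E \<subseteq> D \<and> D \<subseteq> closure E)"

definition nearly_convex_fun :: "('a::real_normed_vector \<Rightarrow> ereal) \<Rightarrow> bool" where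
  "nearly_convex_fun f \<longleftrightarrow> nearly_convex_set (epigraph f)"

text \<open>Subdifferential at a point of the domain (value of psi there is finite for proper psi).\<close>
definition subdiff :: "('a::real_inner \<Rightarrow> ereal) \<Rightarrow> 'a \<Rightarrow> 'a set" where
  "subdiff psi xb = {\<xi>. \<forall>x. ereal (inner \<xi> (x - xb)) \<le> psi x - psi xb}"

end

theory Submission
  imports Defs
begin

text \<open>
  Let xi be a subgradient of f + g at xb, where f xb = a and g xb = b. The set
  K = {(x - y, s + t - <xi, y>) | (x, s) in epi f, (y, t) in epi g} is a linear image of
  epi f \<times> epi g, hence nearly convex, and the subgradient inequality says precisely that
  (0, a + b - <xi, xb>) is the lowest point of K on the vertical axis. So it lies on the
  relative boundary of K, and there is a supporting hyperplane (z, r) |-> <az, z> + ar * r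
  there that does not contain K. It cannot be vertical: if ar = 0, then
  <az, x - y> >= 0 for all x in dom f and y in dom g, and a common relative interior point
  of the two domains forces equality everywhere. Dividing by ar > 0 yields
  eta = - az / ar with eta in the subdifferential of f and xi - eta in that of g.
\<close>

lemma edom_eq_fst_epigraph: "edom f = fst ` epigraph f"
proof -
  have "f x < \<infinity> \<longleftrightarrow> (\<exists>s. f x \<le> ereal s)" for x
    by (cases "f x") auto
  then show ?thesis
    by (force simp: edom_def epigraph_def)
qed

lemma proper_fun_finite:
  assumes "proper_fun f" "x \<in> edom f"
  obtains b where "f x = ereal b"
  using assms by (cases "f x") (auto simp: proper_fun_def edom_def)

lemma subdiff_iff_epigraph:
  fixes f :: "'a::real_inner \<Rightarrow> ereal"
  assumes "f xb = ereal a"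
  shows "\<eta> \<in> subdiff f xb \<longleftrightarrow>
    (\<forall>x s. (x, s) \<in> epigraph f \<longrightarrow> \<eta> \<bullet> (x - xb) \<le> s - a)"
proof
  assume "\<eta> \<in> subdiff f xb"
  then have "ereal (\<eta> \<bullet> (x - xb)) \<le> f x - ereal a" for x
    using assms by (simp add: subdiff_def)
  then show "\<forall>x s. (x, s) \<in> epigraph f \<longrightarrow> \<eta> \<bullet> (x - xb) \<le> s - a"
    by (fastforce simp: epigraph_def dest: order_trans[OF _ ereal_minus_mono[OF _ order_refl]])
next
  assume epi: "\<forall>x s. (x, s) \<in> epigraph f \<longrightarrow> \<eta> \<bullet> (x - xb) \<le> s - a"
  show "\<eta> \<in> subdiff f xb"
    unfolding subdiff_def
  proof clarify
    fix x
    show "ereal (\<eta> \<bullet> (x - xb)) \<le> f x - f xb"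
    proof (cases "f x")
      case (real s)
      then show ?thesis using epi assms by (simp add: epigraph_def)
    next
      case PInf
      then show ?thesis using assms by simp
    next
      case MInf
      then have "(x, \<eta> \<bullet> (x - xb) + a - 1) \<in> epigraph f"
        by (simp add: epigraph_def)
      then show ?thesis using epi by fastforce
    qed
  qed
qed

lemma epigraph_add:
  "(x, s) \<in> epigraph f \<Longrightarrow> (x, t) \<in> epigraph g \<Longrightarrow> (x, s + t) \<in> epigraph (\<lambda>x. f x + g x)"
  by (simp add: epigraph_def) (metis add_mono plus_ereal.simps(1))

lemma subdiff_add:
  fixes f g :: "'a::real_inner \<Rightarrow> ereal"
  assumes "f xb = ereal a" "g xb = ereal b" "u \<in> subdiff f xb" "v \<in> subdiff g xb"
  shows "u + v \<in> subdiff (\<lambda>x. f x + g x) xb"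
  unfolding subdiff_def
proof clarify
  fix x
  have "ereal (u \<bullet> (x - xb)) \<le> f x - a" "ereal (v \<bullet> (x - xb)) \<le> g x - b"
    using assms by (auto simp: subdiff_def)
  then show "ereal ((u + v) \<bullet> (x - xb)) \<le> f x + g x - (f xb + g xb)"
    using assms(1,2) by (cases "f x"; cases "g x") (auto simp: inner_add_left)
qed

lemma nearly_convex_set_Times:
  assumes "nearly_convex_set A" "nearly_convex_set B"
  shows "nearly_convex_set (A \<times> B)"
proof -
  obtain E F where "convex E" "E \<subseteq> A" "A \<subseteq> closure E" "convex F" "F \<subseteq> B" "B \<subseteq> closure F"
    using assms by (auto simp: nearly_convex_set_def)
  then show ?thesis
    unfolding nearly_convex_set_def
    by (intro exI[of _ "E \<times> F"]) (auto simp: closure_Times convex_Times)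
qed

lemma nearly_convex_set_linear_image:
  assumes "bounded_linear L" "nearly_convex_set S"
  shows "nearly_convex_set (L ` S)"
proof -
  obtain E where E: "convex E" "E \<subseteq> S" "S \<subseteq> closure E"
    using assms(2) by (auto simp: nearly_convex_set_def)
  then have "L ` S \<subseteq> closure (L ` E)"
    using closure_bounded_linear_image_subset[OF assms(1)] by blast
  then show ?thesis
    unfolding nearly_convex_set_def using E assms(1)
    by (intro exI[of _ "L ` E"]) (auto intro: convex_linear_image bounded_linear.linear)
qed

lemma rel_interior_between_convex_closure:
  fixes C :: "'a::euclidean_space set"
  assumes "convex E" "E \<subseteq> C" "C \<subseteq> closure E"
  shows "rel_interior C = rel_interior E"
proof -
  have "affine hull C \<subseteq> affine hull (closure E)"
    using assms(3) by (rule hull_mono)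
  then have hulls: "affine hull C = affine hull E"
    using hull_mono[OF assms(2), of affine] by simp
  have "rel_interior E \<subseteq> rel_interior C"
    using assms(2) hulls by (intro rel_interior_mono) auto
  moreover have "rel_interior C \<subseteq> rel_interior (closure E)"
    using assms(3) hulls by (intro rel_interior_mono) auto
  ultimately show ?thesis
    using convex_rel_interior_closure[OF assms(1)] by blast
qed

lemma nearly_convex_set_rel_interior_eq_empty:
  fixes C :: "'a::euclidean_space set"
  assumes "nearly_convex_set C"
  shows "rel_interior C = {} \<longleftrightarrow> C = {}"
proof -
  obtain E where E: "convex E" "E \<subseteq> C" "C \<subseteq> closure E"
    using assms by (auto simp: nearly_convex_set_def)
  then have "rel_interior C = rel_interior E"
    by (rule rel_interior_between_convex_closure)
  moreover have "E = {} \<longleftrightarrow> C = {}"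
    using E(2,3) by auto
  ultimately show ?thesis
    using rel_interior_eq_empty[OF E(1)] by simp
qed

lemma nearly_convex_set_supporting_hyperplane:
  fixes C :: "'a::euclidean_space set"
  assumes "nearly_convex_set C" "p \<in> closure C" "p \<notin> rel_interior C"
  obtains a where "a \<noteq> 0"
    and "\<And>y. y \<in> closure C \<Longrightarrow> a \<bullet> p \<le> a \<bullet> y"
    and "\<And>y. y \<in> rel_interior C \<Longrightarrow> a \<bullet> p < a \<bullet> y"
proof -
  obtain E where E: "convex E" "E \<subseteq> C" "C \<subseteq> closure E"
    using assms(1) by (auto simp: nearly_convex_set_def)
  have "closure C = closure E"
    using E(2,3) by (metis closure_closure closure_mono subset_antisym)
  moreover have "rel_interior C = rel_interior E"
    using rel_interior_between_convex_closure[OF E] .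
  ultimately show ?thesis
    using that supporting_hyperplane_relative_frontier[OF E(1), of p] assms(2,3) by auto
qed

lemma rel_interior_prolong:
  fixes S :: "'a::euclidean_space set"
  assumes "x0 \<in> rel_interior S" "x \<in> S"
  obtains e where "e > 0" "x0 - e *\<^sub>R (x - x0) \<in> S"
proof (cases "x = x0")
  case True
  then show ?thesis
    using that[of 1] assms(2) by simp
next
  case False
  obtain r where r: "r > 0" "ball x0 r \<inter> affine hull S \<subseteq> S"
    using assms(1) mem_rel_interior_ball by blast
  define e where "e = r / (2 * norm (x - x0))"
  have "e > 0"
    using r False by (simp add: e_def)
  have "dist x0 (x0 - e *\<^sub>R (x - x0)) = r / 2"
    using r(1) False by (simp add: e_def dist_norm)
  then have "x0 - e *\<^sub>R (x - x0) \<in> ball x0 r"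
    using r by simp
  moreover have "(1 + e) *\<^sub>R x0 + (- e) *\<^sub>R x \<in> affine hull S"
    using assms rel_interior_subset
    by (intro mem_affine[OF affine_affine_hull]) (auto intro: hull_inc)
  then have "x0 - e *\<^sub>R (x - x0) \<in> affine hull S"
    by (simp add: algebra_simps)
  ultimately show ?thesis
    using that \<open>e > 0\<close> r by blast
qed

lemma rel_interior_inner_min_const:
  fixes S :: "'a::euclidean_space set"
  assumes "x0 \<in> rel_interior S" "\<And>x. x \<in> S \<Longrightarrow> a \<bullet> x0 \<le> a \<bullet> x" "x \<in> S"
  shows "a \<bullet> x = a \<bullet> x0"
proof -
  obtain e where "e > 0" "x0 - e *\<^sub>R (x - x0) \<in> S"
    using rel_interior_prolong[OF assms(1,3)] .
  then have "e * (a \<bullet> (x - x0)) \<le> 0"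
    using assms(2) by (fastforce simp: inner_diff_right)
  then have "a \<bullet> x \<le> a \<bullet> x0"
    using \<open>e > 0\<close> by (simp add: mult_le_0_iff inner_diff_right)
  then show ?thesis
    using assms(2,3) by (meson antisym)
qed

lemma inner_diff_eq_0_common_rel_interior:
  fixes S T :: "'a::euclidean_space set"
  assumes "x0 \<in> rel_interior S" "x0 \<in> rel_interior T"
    and "\<And>x y. x \<in> S \<Longrightarrow> y \<in> T \<Longrightarrow> 0 \<le> a \<bullet> (x - y)"
    and "x \<in> S" "y \<in> T"
  shows "a \<bullet> (x - y) = 0"
proof -
  have "x0 \<in> S" "x0 \<in> T"
    using assms(1,2) rel_interior_subset by blast+
  have "a \<bullet> x = a \<bullet> x0"
    using assms(3)[OF _ \<open>x0 \<in> T\<close>] assms(1,4)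
    by (intro rel_interior_inner_min_const) (auto simp: inner_diff_right)
  moreover have "(- a) \<bullet> y = (- a) \<bullet> x0"
    using assms(3)[OF \<open>x0 \<in> S\<close>] assms(2,5)
    by (intro rel_interior_inner_min_const) (auto simp: inner_diff_right)
  ultimately show ?thesis
    by (simp add: inner_diff_right)
qed

lemma nearly_convex_set_support_at_bottom:
  fixes K :: "('a::euclidean_space \<times> real) set"
  assumes "nearly_convex_set K" "(0, c) \<in> K" "(0, c + 1) \<in> K"
    and "\<And>r. (0, r) \<in> K \<Longrightarrow> c \<le> r"
  obtains ar az where "0 \<le> ar"
    and "\<And>z r. (z, r) \<in> K \<Longrightarrow> ar * c \<le> az \<bullet> z + ar * r"
    and "\<exists>(z, r) \<in> K. ar * c < az \<bullet> z + ar * r"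
proof -
  have "(0, c) \<notin> rel_interior K"
  proof
    assume "(0, c) \<in> rel_interior K"
    then obtain e where "e > 0" "(0, c) - e *\<^sub>R ((0, c + 1) - (0, c)) \<in> K"
      using assms(3) by (rule rel_interior_prolong)
    then show False
      using assms(4)[of "c - e"] by simp
  qed
  moreover have "(0, c) \<in> closure K"
    using assms(2) closure_subset by blast
  ultimately obtain a where a: "\<And>y. y \<in> closure K \<Longrightarrow> a \<bullet> (0, c) \<le> a \<bullet> y"
    "\<And>y. y \<in> rel_interior K \<Longrightarrow> a \<bullet> (0, c) < a \<bullet> y"
    using nearly_convex_set_supporting_hyperplane[OF assms(1)] by metis
  obtain az ar where a_eq: "a = (az, ar)"
    by (cases a)
  have supp: "ar * c \<le> az \<bullet> z + ar * r" if "(z, r) \<in> K" for z r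
    using a(1)[of "(z, r)"] that closure_subset by (auto simp: a_eq)
  obtain w where "w \<in> rel_interior K"
    using nearly_convex_set_rel_interior_eq_empty[OF assms(1)] assms(2) by blast
  then have "w \<in> K" "a \<bullet> (0, c) < a \<bullet> w"
    using a(2) rel_interior_subset by blast+
  then have "\<exists>(z, r) \<in> K. ar * c < az \<bullet> z + ar * r"
    by (cases w) (auto simp: a_eq)
  moreover have "0 \<le> ar"
    using supp[OF assms(3)] by (simp add: distrib_left)
  ultimately show ?thesis
    using that[of ar az] supp by blast
qed

definition epigraph_difference ::
    "'a::real_inner \<Rightarrow> ('a \<Rightarrow> ereal) \<Rightarrow> ('a \<Rightarrow> ereal) \<Rightarrow> ('a \<times> real) set" where
  "epigraph_difference \<xi> f g =
    {(x - y, s + t - \<xi> \<bullet> y) | x s y t. (x, s) \<in> epigraph f \<and> (y, t) \<in> epigraph g}"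

lemma nearly_convex_set_epigraph_difference:
  fixes f g :: "'a::euclidean_space \<Rightarrow> ereal"
  assumes "nearly_convex_fun f" "nearly_convex_fun g"
  shows "nearly_convex_set (epigraph_difference \<xi> f g)"
proof -
  define L where "L w = (fst (fst w) - fst (snd w), snd (fst w) + snd (snd w) - \<xi> \<bullet> fst (snd w))"
    for w :: "('a \<times> real) \<times> ('a \<times> real)"
  have "bounded_linear L"
    unfolding L_def by (intro bounded_linear_intros)
  moreover have "epigraph_difference \<xi> f g = L ` (epigraph f \<times> epigraph g)"
    by (force simp: epigraph_difference_def L_def)
  ultimately show ?thesis
    using assms unfolding nearly_convex_fun_def
    by (simp add: nearly_convex_set_linear_image nearly_convex_set_Times)
qed

lemma epigraph_difference_bottom:
  assumes "f xb = ereal a" "g xb = ereal b" "\<xi> \<in> subdiff (\<lambda>x. f x + g x) xb"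
    and "(0, r) \<in> epigraph_difference \<xi> f g"
  shows "a + b - \<xi> \<bullet> xb \<le> r"
proof -
  obtain x s t where epi: "(x, s) \<in> epigraph f" "(x, t) \<in> epigraph g" and "r = s + t - \<xi> \<bullet> x"
    using assms(4) unfolding epigraph_difference_def by force
  have "f xb + g xb = ereal (a + b)"
    using assms(1,2) by simp
  then have "\<forall>x r. (x, r) \<in> epigraph (\<lambda>x. f x + g x) \<longrightarrow> \<xi> \<bullet> (x - xb) \<le> r - (a + b)"
    using assms(3) subdiff_iff_epigraph[of "\<lambda>x. f x + g x" xb "a + b"] by simp
  then have "\<xi> \<bullet> (x - xb) \<le> s + t - (a + b)"
    using epigraph_add[OF epi] by blast
  then show ?thesis
    using \<open>r = s + t - \<xi> \<bullet> x\<close> by (simp add: inner_diff_right)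
qed

lemma subdiff_add_decouple:
  fixes f g :: "'a::euclidean_space \<Rightarrow> ereal"
  assumes "nearly_convex_fun f" "nearly_convex_fun g"
    and "rel_interior (edom f) \<inter> rel_interior (edom g) \<noteq> {}"
    and "f xb = ereal a" "g xb = ereal b"
    and "\<xi> \<in> subdiff (\<lambda>x. f x + g x) xb"
  obtains \<eta> where "\<And>x s y t. (x, s) \<in> epigraph f \<Longrightarrow> (y, t) \<in> epigraph g \<Longrightarrow>
    \<eta> \<bullet> (x - xb) + (\<xi> - \<eta>) \<bullet> (y - xb) \<le> (s - a) + (t - b)"
proof -
  define c where "c = a + b - \<xi> \<bullet> xb"
  define K where "K = epigraph_difference \<xi> f g"
  have K_mem: "(x - y, s + t - \<xi> \<bullet> y) \<in> K"
    if "(x, s) \<in> epigraph f" "(y, t) \<in> epigraph g" for x s y t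
    using that unfolding K_def epigraph_difference_def by blast
  have "(xb, a) \<in> epigraph f" "(xb, a + 1) \<in> epigraph f" "(xb, b) \<in> epigraph g"
    using assms(4,5) by (simp_all add: epigraph_def)
  then have "(xb - xb, a + b - \<xi> \<bullet> xb) \<in> K" "(xb - xb, (a + 1) + b - \<xi> \<bullet> xb) \<in> K"
    using K_mem by blast+
  then have "(0, c) \<in> K" "(0, c + 1) \<in> K"
    by (simp_all add: c_def algebra_simps)
  moreover have "c \<le> r" if "(0, r) \<in> K" for r
    using epigraph_difference_bottom[OF assms(4-6)] that unfolding K_def c_def .
  moreover have "nearly_convex_set K"
    unfolding K_def using assms(1,2) by (rule nearly_convex_set_epigraph_difference)
  ultimately obtain ar az where "0 \<le> ar"
    and supp: "\<And>z r. (z, r) \<in> K \<Longrightarrow> ar * c \<le> az \<bullet> z + ar * r"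
    and nontrivial: "\<exists>(z, r) \<in> K. ar * c < az \<bullet> z + ar * r"
    using nearly_convex_set_support_at_bottom[of K c] by blast
  have "ar \<noteq> 0"
  proof
    assume "ar = 0"
    obtain x0 where "x0 \<in> rel_interior (edom f)" "x0 \<in> rel_interior (edom g)"
      using assms(3) by blast
    then have "az \<bullet> (x - y) = 0" if "(x, s) \<in> epigraph f" "(y, t) \<in> epigraph g" for x s y t
      using that supp[OF K_mem] \<open>ar = 0\<close>
      by (intro inner_diff_eq_0_common_rel_interior[of x0]) (force simp: edom_eq_fst_epigraph)+
    then show False
      using nontrivial \<open>ar = 0\<close> by (auto simp: K_def epigraph_difference_def)
  qed
  with \<open>0 \<le> ar\<close> have "0 < ar"
    by simp
  define \<eta> where "\<eta> = - (1 / ar) *\<^sub>R az"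
  have scale: "ar * (\<eta> \<bullet> v) = - (az \<bullet> v)" for v
    using \<open>0 < ar\<close> by (simp add: \<eta>_def)
  show ?thesis
  proof (rule that)
    fix x s y t
    assume epi: "(x, s) \<in> epigraph f" "(y, t) \<in> epigraph g"
    have "ar * (\<eta> \<bullet> (x - xb) + (\<xi> - \<eta>) \<bullet> (y - xb)) = ar * (\<xi> \<bullet> (y - xb)) - az \<bullet> (x - y)"
      using scale[of "x - xb"] scale[of "y - xb"]
      by (simp add: inner_diff_left inner_diff_right algebra_simps)
    also have "\<dots> \<le> ar * ((s - a) + (t - b))"
      using supp[OF K_mem[OF epi]] by (simp add: c_def inner_diff_right algebra_simps)
    finally show "\<eta> \<bullet> (x - xb) + (\<xi> - \<eta>) \<bullet> (y - xb) \<le> (s - a) + (t - b)"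
      using \<open>0 < ar\<close> by simp
  qed
qed

lemma subdiff_add_decompose:
  fixes f g :: "'a::euclidean_space \<Rightarrow> ereal"
  assumes "nearly_convex_fun f" "nearly_convex_fun g"
    and "rel_interior (edom f) \<inter> rel_interior (edom g) \<noteq> {}"
    and "f xb = ereal a" "g xb = ereal b"
    and "\<xi> \<in> subdiff (\<lambda>x. f x + g x) xb"
  obtains \<eta> where "\<eta> \<in> subdiff f xb" "\<xi> - \<eta> \<in> subdiff g xb"
proof -
  obtain \<eta> where decoupled: "\<And>x s y t. (x, s) \<in> epigraph f \<Longrightarrow> (y, t) \<in> epigraph g \<Longrightarrow>
      \<eta> \<bullet> (x - xb) + (\<xi> - \<eta>) \<bullet> (y - xb) \<le> (s - a) + (t - b)"
    using subdiff_add_decouple[OF assms] by blast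
  have "(xb, a) \<in> epigraph f" "(xb, b) \<in> epigraph g"
    using assms(4,5) by (simp_all add: epigraph_def)
  then have "\<eta> \<in> subdiff f xb" "\<xi> - \<eta> \<in> subdiff g xb"
    using decoupled by (fastforce simp: subdiff_iff_epigraph[of f xb a] subdiff_iff_epigraph[of g xb b] assms(4,5))+
  then show ?thesis
    by (rule that)
qed

theorem mainTheorem4:
  fixes phi1 phi2 :: "real ^ 'n \<Rightarrow> ereal"
  assumes "proper_fun phi1" and "proper_fun phi2"
    and "nearly_convex_fun phi1" and "nearly_convex_fun phi2"
    and "rel_interior (edom phi1) \<inter> rel_interior (edom phi2) \<noteq> {}"
  shows "\<forall>xb \<in> edom phi1 \<inter> edom phi2.
           subdiff (\<lambda>x. phi1 x + phi2 x) xb =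
           {a + b | a b. a \<in> subdiff phi1 xb \<and> b \<in> subdiff phi2 xb}"
proof
  fix xb
  assume "xb \<in> edom phi1 \<inter> edom phi2"
  then obtain a b where ab: "phi1 xb = ereal a" "phi2 xb = ereal b"
    using proper_fun_finite assms(1,2) by (metis IntD1 IntD2)
  show "subdiff (\<lambda>x. phi1 x + phi2 x) xb =
      {a + b | a b. a \<in> subdiff phi1 xb \<and> b \<in> subdiff phi2 xb}"
  proof (intro subset_antisym subsetI)
    fix \<xi>
    assume "\<xi> \<in> subdiff (\<lambda>x. phi1 x + phi2 x) xb"
    then obtain \<eta> where "\<eta> \<in> subdiff phi1 xb" "\<xi> - \<eta> \<in> subdiff phi2 xb"
      using subdiff_add_decompose[OF assms(3-5) ab] by blast
    then show "\<xi> \<in> {a + b | a b. a \<in> subdiff phi1 xb \<and> b \<in> subdiff phi2 xb}"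
      by force
  next
    fix \<zeta>
    assume "\<zeta> \<in> {a + b | a b. a \<in> subdiff phi1 xb \<and> b \<in> subdiff phi2 xb}"
    then show "\<zeta> \<in> subdiff (\<lambda>x. phi1 x + phi2 x) xb"
      using subdiff_add[of phi1 xb a phi2 b] ab by blast
  qed
qed

end
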